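(* Let $n,k$ be positive integers and $t$ a real number with $2k<n\leq tk$. Let $h(n,k)=\binom{n-1}{k-1}-\binom{n-k-1}{k-1}+1$. Then \[ \frac{h(n,k)^2}{\binom{n-1}{k-1}^2}>1-2\left(\frac{2t-3}{2t-1}\right)^{k-1}. \] *)

theory Defs
  imports Complex_Main
begin

definition h :: "nat \<Rightarrow> nat \<Rightarrow> nat" where
  "h n k = ((n - 1) choose (k - 1)) - ((n - k - 1) choose (k - 1)) + 1"

end

theory Submission
  imports Defs
begin

text \<open>
  Write \<open>A = C(n-1, k-1)\<close> and \<open>B = C(n-k-1, k-1)\<close>, so that \<open>h = A - B + 1 > A - B\<close> and
  \<open>(h/A)\<^sup>2 > (1 - B/A)\<^sup>2 \<ge> 1 - 2 B/A\<close>. The ratio \<open>B/A\<close> is the product of the \<open>k - 1\<close> factors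
  \<open>1 - k/(n-1-i)\<close>; pairing the factor for \<open>i\<close> with the one for \<open>k-2-i\<close> and using that
  \<open>log (1 - k/x)\<close> is concave, each pair is at most the square of the factor at the mean
  denominator \<open>n - k/2\<close>. Hence \<open>B/A \<le> ((2n-3k)/(2n-k))\<^bsup>k-1\<^esup>\<close>, and \<open>n \<le> t k\<close> bounds the base by
  \<open>(2t-3)/(2t-1)\<close>.
\<close>

lemma diff_div_mult_le_mean_sq:
  fixes x y c :: real
  assumes "0 < c" "c \<le> x" "c \<le> y"
  shows "(x - c) / x * ((y - c) / y) \<le> (((x + y) / 2 - c) / ((x + y) / 2))\<^sup>2"
proof -
  define m where "m = (x + y) / 2"
  define d where "d = y - m"
  have x: "x = m - d" and y: "y = m + d" unfolding d_def m_def by simp_all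
  have "m > 0" "x > 0" "y > 0" using assms unfolding m_def by auto
  have "(m - c)\<^sup>2 * (x * y) - (x - c) * (y - c) * m\<^sup>2 = d\<^sup>2 * (c * (2 * m - c))"
    unfolding x y by (simp add: power2_eq_square algebra_simps)
  also have "\<dots> \<ge> 0" using assms unfolding m_def by simp
  finally have "(x - c) * (y - c) * m\<^sup>2 \<le> (m - c)\<^sup>2 * (x * y)" by simp
  with \<open>m > 0\<close> \<open>x > 0\<close> \<open>y > 0\<close> show ?thesis
    unfolding m_def[symmetric] by (simp add: field_simps power2_eq_square)
qed

lemma prod_le_power_if_mirror_pairs_le:
  fixes f :: "nat \<Rightarrow> 'a::linordered_idom"
  assumes nonneg: "\<And>i. i < K \<Longrightarrow> 0 \<le> f i"
    and pairs: "\<And>i. i < K \<Longrightarrow> f i * f (K - Suc i) \<le> g\<^sup>2"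
    and "0 \<le> g"
  shows "prod f {..<K} \<le> g ^ K"
proof (rule power2_le_imp_le)
  have "(prod f {..<K})\<^sup>2 = prod f {..<K} * (\<Prod>i<K. f (K - Suc i))"
    by (simp add: power2_eq_square prod.nat_diff_reindex)
  also have "\<dots> = (\<Prod>i<K. f i * f (K - Suc i))"
    by (rule prod.distrib[symmetric])
  also have "\<dots> \<le> (\<Prod>i<K. g\<^sup>2)"
    using nonneg pairs by (intro prod_mono) auto
  also have "\<dots> = (g ^ K)\<^sup>2"
    by (simp add: power_mult[symmetric] mult.commute)
  finally show "(prod f {..<K})\<^sup>2 \<le> (g ^ K)\<^sup>2" .
  show "0 \<le> g ^ K" using \<open>0 \<le> g\<close> by simp
qed

lemma choose_diff_div_choose:
  assumes "j + d \<le> m"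
  shows "real ((m - d) choose j) / real (m choose j)
           = (\<Prod>i<j. (real m - real d - real i) / (real m - real i))"
proof -
  have "real ((m - d) choose j) / real (m choose j)
          = (\<Prod>i<j. real (m - d - i) / real (j - i)) / (\<Prod>i<j. real (m - i) / real (j - i))"
    using assms by (simp add: binomial_altdef_of_nat atLeast0LessThan)
  also have "\<dots> = (\<Prod>i<j. real (m - d - i) / real (j - i) / (real (m - i) / real (j - i)))"
    by (rule prod_dividef[symmetric])
  also have "\<dots> = (\<Prod>i<j. (real m - real d - real i) / (real m - real i))"
    using assms by (intro prod.cong) (auto simp: of_nat_diff)
  finally show ?thesis .
qed

lemma choose_ratio_le_power:
  assumes "0 < k" "2 * k \<le> n"
  shows "real ((n - k - 1) choose (k - 1)) / real ((n - 1) choose (k - 1))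
           \<le> ((2 * real n - 3 * real k) / (2 * real n - real k)) ^ (k - 1)"
proof -
  define f where "f i = (real (n - 1) - real k - real i) / (real (n - 1) - real i)" for i
  have "0 < 2 * real n - real k" using assms by linarith
  have ratio: "real ((n - k - 1) choose (k - 1)) / real ((n - 1) choose (k - 1)) = prod f {..<k - 1}"
    using choose_diff_div_choose[of "k - 1" k "n - 1"] assms
    by (simp add: f_def diff_commute)
  have "prod f {..<k - 1} \<le> ((2 * real n - 3 * real k) / (2 * real n - real k)) ^ (k - 1)"
  proof (rule prod_le_power_if_mirror_pairs_le)
    fix i assume "i < k - 1"
    then show "0 \<le> f i" using assms by (simp add: f_def of_nat_diff)
    let ?x = "real (n - 1) - real i" and ?y = "real (n - 1) - real (k - 1 - Suc i)"
    have "f i * f (k - 1 - Suc i) = (?x - real k) / ?x * ((?y - real k) / ?y)"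
      by (simp add: f_def algebra_simps)
    also have "\<dots> \<le> (((?x + ?y) / 2 - real k) / ((?x + ?y) / 2))\<^sup>2"
      using \<open>i < k - 1\<close> assms by (intro diff_div_mult_le_mean_sq) (auto simp: of_nat_diff)
    also have "(?x + ?y) / 2 = (2 * real n - real k) / 2"
      using \<open>i < k - 1\<close> assms by (simp add: of_nat_diff field_simps)
    also have "((2 * real n - real k) / 2 - real k) / ((2 * real n - real k) / 2)
                 = (2 * real n - 3 * real k) / (2 * real n - real k)"
      using \<open>0 < 2 * real n - real k\<close> by (simp add: field_simps)
    finally show "f i * f (k - 1 - Suc i) \<le> ((2 * real n - 3 * real k) / (2 * real n - real k))\<^sup>2" .
  next
    show "0 \<le> (2 * real n - 3 * real k) / (2 * real n - real k)"
      using assms by (intro divide_nonneg_nonneg) auto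
  qed
  with ratio show ?thesis by simp
qed

lemma base_le_of_le_mult:
  fixes n k t :: real
  assumes "0 < k" "k < 2 * n" "n \<le> t * k"
  shows "(2 * n - 3 * k) / (2 * n - k) \<le> (2 * t - 3) / (2 * t - 1)"
proof -
  have denom_le: "2 * n - k \<le> (2 * t - 1) * k" using assms(3) by (simp add: algebra_simps)
  then have "0 < (2 * t - 1) * k" using assms by linarith
  then have "0 < 2 * t - 1" using assms by (simp add: zero_less_mult_iff)
  have "2 * k / ((2 * t - 1) * k) \<le> 2 * k / (2 * n - k)"
    using denom_le assms by (intro divide_left_mono) auto
  moreover have "(2 * n - 3 * k) / (2 * n - k) = 1 - 2 * k / (2 * n - k)"
    using assms by (simp add: field_simps)
  moreover have "(2 * t - 3) / (2 * t - 1) = 1 - 2 * k / ((2 * t - 1) * k)"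
    using assms \<open>0 < 2 * t - 1\<close> by (simp add: field_simps)
  ultimately show ?thesis by linarith
qed

lemma one_minus_twice_ratio_lt_sq:
  fixes a b :: real
  assumes "0 < a" "0 \<le> b" "b \<le> a"
  shows "1 - 2 * (b / a) < ((a - b + 1) / a)\<^sup>2"
proof -
  define y where "y = b / a"
  have "0 \<le> 1 - y" using assms by (simp add: y_def)
  have "(a - b + 1) / a = 1 - y + 1 / a" using assms by (simp add: y_def field_simps)
  then have "1 - y < (a - b + 1) / a" using assms by simp
  then have "(1 - y)\<^sup>2 < ((a - b + 1) / a)\<^sup>2"
    using \<open>0 \<le> 1 - y\<close> by (intro power_strict_mono) auto
  moreover have "1 - 2 * y \<le> (1 - y)\<^sup>2" by (simp add: power2_diff)
  ultimately show ?thesis unfolding y_def by linarith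
qed

theorem proposition1p8:
  fixes n k :: nat and t :: real
  assumes "n > 0" "k > 0" "2 * k < n" "real n \<le> t * real k"
  shows "(real (h n k))\<^sup>2 / (real ((n - 1) choose (k - 1)))\<^sup>2
           > 1 - 2 * ((2 * t - 3) / (2 * t - 1)) ^ (k - 1)"
proof -
  define A where "A = (n - 1) choose (k - 1)"
  define B where "B = (n - k - 1) choose (k - 1)"
  have "0 < A" using assms by (simp add: A_def)
  have "B \<le> A" unfolding A_def B_def by (rule binomial_right_mono) simp
  then have h_eq: "real (h n k) = real A - real B + 1"
    unfolding h_def A_def[symmetric] B_def[symmetric] by (simp add: of_nat_diff)
  have "real B / real A \<le> ((2 * real n - 3 * real k) / (2 * real n - real k)) ^ (k - 1)"
    unfolding A_def B_def using assms by (intro choose_ratio_le_power) auto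
  also have "\<dots> \<le> ((2 * t - 3) / (2 * t - 1)) ^ (k - 1)"
    using assms by (intro power_mono base_le_of_le_mult divide_nonneg_nonneg) auto
  finally have "1 - 2 * ((2 * t - 3) / (2 * t - 1)) ^ (k - 1) \<le> 1 - 2 * (real B / real A)"
    by simp
  also have "\<dots> < ((real A - real B + 1) / real A)\<^sup>2"
    using \<open>0 < A\<close> \<open>B \<le> A\<close> by (intro one_minus_twice_ratio_lt_sq) auto
  finally show ?thesis by (simp add: h_eq A_def power_divide)
qed

end
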